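(* Let $f\in\mathcal{R}$ with $f(z)=z+\sum_{n=2}^\infty a_nz^n$, and let $\Gamma_1=-\tfrac12 a_2$, $\Gamma_2=-\tfrac12\left(a_3-\tfrac32 a_2^2\right)$. Then $|\Gamma_1|\le\frac12$ and $|\Gamma_2|\le\frac{5}{12}$, and both bounds are attained by some $f\in\mathcal{R}$.
   Context: $\mathbb{D}$ is the open unit disk; $\mathcal{A}$ is the class of holomorphic $f$ on $\mathbb{D}$ with $f(0)=0$, $f'(0)=1$; $\mathcal{R}=\{f\in\mathcal{A}:\operatorname{Re} f'(z)>0\ \forall z\in\mathbb{D}\}$. $\Gamma_n$ are defined by $\log(f^{-1}(w)/w)=2\sum_{n\ge1}\Gamma_nw^n$. *)

theory Defs
  imports "HOL-Complex_Analysis.Complex_Analysis"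
begin

definition classA :: "(complex \<Rightarrow> complex) set" where
  "classA = {f. f holomorphic_on ball 0 1 \<and> f 0 = 0 \<and> deriv f 0 = 1}"

definition classR :: "(complex \<Rightarrow> complex) set" where
  "classR = {f \<in> classA. \<forall>z \<in> ball 0 1. Re (deriv f z) > 0}"

definition coeffA :: "(complex \<Rightarrow> complex) \<Rightarrow> nat \<Rightarrow> complex" where
  "coeffA f n = (deriv ^^ n) f 0 / of_nat (fact n)"

definition Gamma1 :: "(complex \<Rightarrow> complex) \<Rightarrow> complex" where
  "Gamma1 f = - (1/2) * coeffA f 2"

definition Gamma2 :: "(complex \<Rightarrow> complex) \<Rightarrow> complex" where
  "Gamma2 f = - (1/2) * (coeffA f 3 - (3/2) * (coeffA f 2)^2)"

end

theory Submission
  imports Defs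
begin

(* For f in R the derivative p = f' satisfies Re p > 0 and p 0 = 1, so its Cayley transform
   w = (p - 1) / (p + 1) is a self-map of the disc fixing 0. The Schwarz-Pick estimate applied to
   w z / z gives |w''(0)| <= 2 (1 - |w'(0)|^2), i.e. |p''(0) - p'(0)^2| <= 4 - |p'(0)|^2, which also
   forces |p'(0)| <= 2. With a2 = p'(0)/2 and a3 = p''(0)/6 one has Gamma1 = -p'(0)/4 and
   Gamma2 = -(p''(0) - p'(0)^2)/12 + 5 p'(0)^2/48, whence both bounds. Equality holds in both for
   f' = (1 + z)/(1 - z). *)

lemma deriv_cong_on_open:
  assumes "open S" "z \<in> S" "\<And>w. w \<in> S \<Longrightarrow> f w = g w"
  shows "deriv f z = deriv g z"
  using assms by (intro deriv_cong_ev eventually_mono[OF eventually_nhds_in_open]) auto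

lemma norm_Cayley_lt_1:
  fixes u :: complex
  assumes "Re u > 0"
  shows "norm ((u - 1) / (u + 1)) < 1"
proof -
  have "norm (u - 1)^2 < norm (u + 1)^2"
    unfolding cmod_power2 using assms by (simp add: power2_eq_square algebra_simps)
  then have "norm (u - 1) < norm (u + 1)"
    by (rule power2_less_imp_less) simp
  then show ?thesis
    by (simp add: norm_divide divide_less_eq)
qed

lemma Schwarz_Pick_origin:
  assumes holg: "g holomorphic_on ball 0 1"
    and g_lt: "\<And>z. norm z < 1 \<Longrightarrow> norm (g z) < 1"
  shows "norm (deriv g 0) \<le> 1 - norm (g 0)^2"
proof -
  define a where "a = g 0"
  have a_lt: "norm a < 1"
    using g_lt[of 0] by (simp add: a_def)
  have aa: "1 - cnj a * a = of_real (1 - norm a ^ 2)"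
    using complex_norm_square[of a] by (simp add: mult.commute)
  have aa_pos: "1 - norm a ^ 2 > 0"
    using a_lt by (simp add: power_less_one_iff)
  have den_nz: "1 - cnj a * g z \<noteq> 0" if "norm z < 1" for z
  proof
    assume "1 - cnj a * g z = 0"
    then have "norm (cnj a * g z) = 1"
      by (metis norm_one right_minus_eq)
    moreover have "norm (cnj a * g z) < 1"
      using norm_mult_less[of "cnj a" 1 "g z" 1] a_lt g_lt[OF that] by simp
    ultimately show False
      by simp
  qed
  define h where "h z = Moebius_function 0 a (g z)" for z
  have holh: "h holomorphic_on ball 0 1"
    unfolding h_def Moebius_function_simple using den_nz by (auto intro!: holomorphic_intros holg)
  have "norm (deriv h 0) \<le> 1"
  proof (rule Schwarz_Lemma(2)[OF holh, where \<xi> = 0])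
    show "h 0 = 0"
      by (simp add: h_def a_def Moebius_function_eq_zero)
    show "norm (h z) < 1" if "norm z < 1" for z
      unfolding h_def using a_lt g_lt[OF that] by (rule Moebius_function_norm_lt_1)
  qed simp
  moreover have "norm (deriv h 0) = norm (deriv g 0) / (1 - norm a ^ 2)"
  proof -
    have "(h has_field_derivative
            (deriv g 0 * (1 - cnj a * a) + cnj a * deriv g 0 * (a - a)) / (1 - cnj a * a)^2) (at 0)"
      unfolding h_def Moebius_function_simple
      using den_nz[of 0] holomorphic_derivI[OF holg, of 0]
      by (auto intro!: derivative_eq_intros simp: a_def power2_eq_square)
    then have "deriv h 0 = deriv g 0 / of_real (1 - norm a ^ 2)"
      using aa aa_pos by (auto dest!: DERIV_imp_deriv simp: power2_eq_square)
    then show ?thesis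
      by (simp only: norm_divide norm_of_real abs_of_pos[OF aa_pos])
  qed
  ultimately have "norm (deriv g 0) \<le> 1 - norm a ^ 2"
    using aa_pos by (simp add: norm_divide divide_le_eq)
  then show ?thesis
    by (simp add: a_def)
qed

lemma derivs_of_linear_on_disc:
  assumes "\<And>z. norm z < 1 \<Longrightarrow> w z = \<alpha> * z"
  shows "deriv w 0 = \<alpha>" and "deriv (deriv w) 0 = 0"
proof -
  have dw: "deriv w z = \<alpha>" if "z \<in> ball 0 1" for z
    using deriv_cong_on_open[of "ball 0 1" z w "\<lambda>z. \<alpha> * z"] that assms by simp
  then show "deriv w 0 = \<alpha>"
    by simp
  show "deriv (deriv w) 0 = 0"
    using deriv_cong_on_open[of "ball 0 1" 0 "deriv w" "\<lambda>_. \<alpha>"] dw by simp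
qed

lemma Schwarz_second_derivative:
  assumes holw: "w holomorphic_on ball 0 1" and w0: "w 0 = 0"
    and w_lt: "\<And>z. norm z < 1 \<Longrightarrow> norm (w z) < 1"
  shows "norm (deriv (deriv w) 0) \<le> 2 * (1 - norm (deriv w 0)^2)"
proof -
  note Schwarz = Schwarz_Lemma[OF holw w0 w_lt]
  obtain g where holg: "g holomorphic_on ball 0 1"
    and w_eq: "\<And>z. norm z < 1 \<Longrightarrow> w z = z * g z" and dw0: "deriv w 0 = g 0"
    using Schwarz3[OF holw w0] by blast
  have holdg: "deriv g holomorphic_on ball 0 1"
    using holg by (simp add: holomorphic_deriv)
  have dw: "deriv w z = g z + z * deriv g z" if "z \<in> ball 0 1" for z
  proof -
    have "deriv w z = deriv (\<lambda>z. z * g z) z"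
      using that w_eq by (intro deriv_cong_on_open[of "ball 0 1"]) auto
    also have "\<dots> = g z + z * deriv g z"
      using holomorphic_derivI[OF holg _ that] by (intro DERIV_imp_deriv) (auto intro!: derivative_eq_intros)
    finally show ?thesis .
  qed
  have ddw0: "deriv (deriv w) 0 = 2 * deriv g 0"
  proof -
    have "deriv (deriv w) 0 = deriv (\<lambda>z. g z + z * deriv g z) 0"
      using dw by (intro deriv_cong_on_open[of "ball 0 1"]) auto
    also have "\<dots> = 2 * deriv g 0"
      using holomorphic_derivI[OF holg, of 0] holomorphic_derivI[OF holdg, of 0]
      by (intro DERIV_imp_deriv) (auto intro!: derivative_eq_intros)
    finally show ?thesis .
  qed
  show ?thesis
  proof (cases "\<exists>\<alpha>. (\<forall>z. norm z < 1 \<longrightarrow> w z = \<alpha> * z) \<and> norm \<alpha> = 1")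
    case True
    then obtain \<alpha> where lin: "\<And>z. norm z < 1 \<Longrightarrow> w z = \<alpha> * z" and "norm \<alpha> = 1"
      by blast
    then show ?thesis
      using derivs_of_linear_on_disc[OF lin] by simp
  next
    case not_rotation: False
    have "norm (g z) < 1" if z: "norm z < 1" for z
    proof (cases "z = 0")
      case True
      then show ?thesis
        using Schwarz(2)[of 0] Schwarz(3) not_rotation dw0 by fastforce
    next
      case False
      then have "norm (w z) < norm z"
        using Schwarz_Lemma(1)[OF holw w0 w_lt z] Schwarz(3) not_rotation z by fastforce
      then show ?thesis
        using w_eq[OF z] False by (simp add: norm_mult)
    qed
    then have "norm (deriv g 0) \<le> 1 - norm (g 0)^2"
      by (rule Schwarz_Pick_origin[OF holg])
    then show ?thesis
      by (simp add: ddw0 dw0 norm_mult)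
  qed
qed

lemma Caratheodory_second_derivative:
  assumes holp: "p holomorphic_on ball 0 1" and p0: "p 0 = 1"
    and re_p: "\<And>z. z \<in> ball 0 1 \<Longrightarrow> Re (p z) > 0"
  shows "norm (deriv (deriv p) 0 - (deriv p 0)^2) \<le> 4 - norm (deriv p 0)^2"
proof -
  have holdp: "deriv p holomorphic_on ball 0 1"
    using holp by (simp add: holomorphic_deriv)
  have p_plus_1_nz: "p z + 1 \<noteq> 0" if "z \<in> ball 0 1" for z
    using re_p[OF that] by (auto simp: complex_eq_iff)
  define w where "w z = (p z - 1) / (p z + 1)" for z
  have holw: "w holomorphic_on ball 0 1"
    unfolding w_def using p_plus_1_nz by (auto intro!: holomorphic_intros holp)
  have w_lt: "norm (w z) < 1" if "norm z < 1" for z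
    unfolding w_def using that by (intro norm_Cayley_lt_1 re_p) simp
  have dw: "deriv w z = 2 * deriv p z / (p z + 1)^2" if "z \<in> ball 0 1" for z
  proof -
    have "deriv w z = (deriv p z * (p z + 1) - (p z - 1) * deriv p z) / (p z + 1)^2"
      unfolding w_def using p_plus_1_nz[OF that] holomorphic_derivI[OF holp _ that]
      by (intro DERIV_imp_deriv) (auto intro!: derivative_eq_intros simp: power2_eq_square add.commute)
    then show ?thesis
      by (simp add: algebra_simps)
  qed
  have ddw0: "deriv (deriv w) 0 = (deriv (deriv p) 0 - (deriv p 0)^2) / 2"
  proof -
    have "deriv (deriv w) 0 = deriv (\<lambda>z. 2 * deriv p z / (p z + 1)^2) 0"
      using dw by (intro deriv_cong_on_open[of "ball 0 1"]) auto
    also have "\<dots> = (2 * deriv (deriv p) 0 * (p 0 + 1)^2 - 2 * deriv p 0 * (2 * (p 0 + 1) * deriv p 0))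
                      / ((p 0 + 1)^2)^2"
      using holomorphic_derivI[OF holp, of 0] holomorphic_derivI[OF holdp, of 0]
      by (intro DERIV_imp_deriv) (auto intro!: derivative_eq_intros simp: p0)
    also have "\<dots> = (deriv (deriv p) 0 - (deriv p 0)^2) / 2"
      by (simp add: p0 power2_eq_square field_simps)
    finally show ?thesis .
  qed
  have "norm (deriv (deriv w) 0) \<le> 2 * (1 - norm (deriv w 0)^2)"
    using holw w_lt by (intro Schwarz_second_derivative) (auto simp: w_def p0)
  then show ?thesis
    using dw[of 0] by (simp add: ddw0 p0 norm_divide norm_power field_simps)
qed

lemma coeffA_2: "coeffA f 2 = deriv (deriv f) 0 / 2"
  by (simp add: coeffA_def numeral_2_eq_2)

lemma coeffA_3: "coeffA f 3 = deriv (deriv (deriv f)) 0 / 6"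
  by (simp add: coeffA_def numeral_3_eq_3 fact_numeral)

lemma Gamma_bounds_classR:
  assumes "f \<in> classR"
  shows "cmod (Gamma1 f) \<le> 1/2" and "cmod (Gamma2 f) \<le> 5/12"
proof -
  have holf: "f holomorphic_on ball 0 1" and df0: "deriv f 0 = 1"
    and re_df: "\<And>z. z \<in> ball 0 1 \<Longrightarrow> Re (deriv f z) > 0"
    using assms by (auto simp: classR_def classA_def)
  define P1 where "P1 = deriv (deriv f) 0"
  define P2 where "P2 = deriv (deriv (deriv f)) 0"
  have Caratheodory: "norm (P2 - P1^2) \<le> 4 - norm P1^2"
    unfolding P1_def P2_def using holf df0 re_df
    by (intro Caratheodory_second_derivative) (auto simp: holomorphic_deriv)
  then have P1_sq_le: "norm P1^2 \<le> 4"
    using norm_ge_zero[of "P2 - P1^2"] by linarith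
  then have P1_le: "norm P1 \<le> 2"
    using power2_le_imp_le[of "norm P1" 2] by simp
  have "Gamma1 f = - P1 / 4"
    by (simp add: Gamma1_def coeffA_2 P1_def)
  then show "cmod (Gamma1 f) \<le> 1/2"
    using P1_le by (simp add: norm_divide)
  have "Gamma2 f = - (P2 - P1^2) / 12 + 5/48 * P1^2"
    by (simp add: Gamma2_def coeffA_2 coeffA_3 P1_def P2_def field_simps power2_eq_square)
  then have "cmod (Gamma2 f) \<le> norm (- (P2 - P1^2) / 12) + norm (5/48 * P1^2)"
    by (metis norm_triangle_ineq)
  also have "\<dots> = norm (P2 - P1^2) / 12 + 5/48 * norm P1^2"
    by (simp add: norm_divide norm_mult norm_power norm_minus_commute)
  also have "\<dots> \<le> 1/3 + norm P1^2 / 48"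
    using Caratheodory by simp
  also have "\<dots> \<le> 5/12"
    using P1_sq_le by simp
  finally show "cmod (Gamma2 f) \<le> 5/12" .
qed

(* The derivative -1 + 2 / (1 - z) = (1 + z) / (1 - z) maps the disc onto the right half-plane. *)
definition extremal_R :: "complex \<Rightarrow> complex" where
  "extremal_R z = - z - 2 * Ln (1 - z)"

lemma has_field_derivative_extremal_R:
  assumes "z \<in> ball 0 1"
  shows "(extremal_R has_field_derivative -1 + 2 / (1 - z)) (at z)"
proof -
  have "1 - z \<notin> \<real>\<^sub>\<le>\<^sub>0"
    using assms complex_Re_le_cmod[of z] by (auto simp: complex_nonpos_Reals_iff)
  moreover have "1 - z \<noteq> 0"
    using assms by auto
  ultimately show ?thesis
    unfolding extremal_R_def by (auto intro!: derivative_eq_intros simp: field_simps)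
qed

lemma extremal_R_derivs:
  assumes "z \<in> ball 0 1"
  shows "deriv extremal_R z = -1 + 2 / (1 - z)"
    and "deriv (deriv extremal_R) z = 2 / (1 - z)^2"
    and "deriv (deriv (deriv extremal_R)) z = 4 / (1 - z)^3"
proof -
  have d1: "deriv extremal_R u = -1 + 2 / (1 - u)" if "u \<in> ball 0 1" for u
    using has_field_derivative_extremal_R[OF that] by (rule DERIV_imp_deriv)
  have d2: "deriv (deriv extremal_R) u = 2 / (1 - u)^2" if "u \<in> ball 0 1" for u
  proof -
    have "deriv (deriv extremal_R) u = deriv (\<lambda>u. -1 + 2 / (1 - u)) u"
      using that d1 by (intro deriv_cong_on_open[of "ball 0 1"]) auto
    also have "\<dots> = 2 / (1 - u)^2"
      using that by (intro DERIV_imp_deriv) (auto intro!: derivative_eq_intros simp: power2_eq_square)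
    finally show ?thesis .
  qed
  show "deriv extremal_R z = -1 + 2 / (1 - z)" "deriv (deriv extremal_R) z = 2 / (1 - z)^2"
    using assms by (simp_all add: d1 d2)
  have nz: "1 - z \<noteq> 0"
    using assms by auto
  have "deriv (deriv (deriv extremal_R)) z = deriv (\<lambda>u. 2 / (1 - u)^2) z"
    using assms d2 by (intro deriv_cong_on_open[of "ball 0 1"]) auto
  also have "\<dots> = 4 / (1 - z)^3"
    using nz by (intro DERIV_imp_deriv) (auto intro!: derivative_eq_intros simp: divide_simps power2_eq_square power3_eq_cube)
  finally show "deriv (deriv (deriv extremal_R)) z = 4 / (1 - z)^3" .
qed

lemma extremal_R_in_classR: "extremal_R \<in> classR"
proof -
  have "extremal_R holomorphic_on ball 0 1"
    using has_field_derivative_extremal_R holomorphic_on_open by blast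
  moreover have "Re (deriv extremal_R z) > 0" if z: "z \<in> ball 0 1" for z
  proof -
    have unit: "(Re z)^2 + (Im z)^2 < 1"
      using z by (simp add: cmod_power2[symmetric] power_less_one_iff)
    have "Re z < 1"
      using z complex_Re_le_cmod[of z] by simp
    then have den_pos: "(1 - Re z)^2 + (Im z)^2 > 0"
      by (simp add: add_pos_nonneg)
    have "Re (deriv extremal_R z) = -1 + 2 * (1 - Re z) / ((1 - Re z)^2 + (Im z)^2)"
      using z by (simp add: extremal_R_derivs Re_divide)
    also have "\<dots> = (1 - (Re z)^2 - (Im z)^2) / ((1 - Re z)^2 + (Im z)^2)"
      using den_pos by (simp add: field_simps power2_eq_square)
    also have "\<dots> > 0"
      using den_pos unit by simp
    finally show ?thesis .
  qed
  ultimately show ?thesis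
    by (simp add: classR_def classA_def extremal_R_def extremal_R_derivs)
qed

lemma coeffA_extremal_R: "coeffA extremal_R 2 = 1" "coeffA extremal_R 3 = 2/3"
  by (simp_all add: coeffA_2 coeffA_3 extremal_R_derivs)

theorem mainTheorem6:
  shows "(\<forall>f \<in> classR. cmod (Gamma1 f) \<le> 1/2 \<and> cmod (Gamma2 f) \<le> 5/12)
       \<and> (\<exists>f \<in> classR. cmod (Gamma1 f) = 1/2)
       \<and> (\<exists>f \<in> classR. cmod (Gamma2 f) = 5/12)"
proof -
  have "Gamma1 extremal_R = - 1/2" "Gamma2 extremal_R = 5/12"
    by (simp_all add: Gamma1_def Gamma2_def coeffA_extremal_R)
  then have "cmod (Gamma1 extremal_R) = 1/2" "cmod (Gamma2 extremal_R) = 5/12"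
    by (simp_all only: norm_minus_cancel norm_divide norm_numeral norm_one)
  then show ?thesis
    using Gamma_bounds_classR extremal_R_in_classR by blast
qed

end
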